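(* For every $\lambda>\lambda^*$, $e(\lambda)>-\frac{1}{\gamma b^*}$, where $b^*=\max_{1\le j\le n}b_j$.
   Context: Standing setup. Let $\gamma>0$; let $a_1,\dots,a_p>0$ with weights $\omega_i>0$, $\sum_i\omega_i=1$, and $b_1,\dots,b_n>0$ with weights $\pi_j>0$, $\sum_j\pi_j=1$. Let $\mu$ be the limiting spectral distribution of $\mathbf{N}\mathbf{N}^T$ where $\mathbf{N}=\mathbf{A}^{1/2}\mathbf{G}\mathbf{B}^{1/2}$ is $k\times l$, $\mathbf{G}$ has iid mean-zero entries of variance $1/l$, $k/l\to\gamma$, and the spectral distributions of $\mathbf{A},\mathbf{B}$ converge to $\nu=\sum_i\omega_i\delta_{a_i}$ and $\underline{\nu}=\sum_j\pi_j\delta_{b_j}$. $\mu$ is a compactly supported probability measure on $[0,\infty)$; $\lambda^*>0$ is the right endpoint of its support, and $s(\lambda)=\int\frac{d\mu(t)}{t-\lambda}$ for $\lambda>\lambda^*$. Define $G(e)=\sum_{j=1}^n\frac{b_j\pi_j}{1+\gamma b_j e}$. It is known (master equations) that there is a continuous (indeed smooth) real function $e(\lambda)$ on $(\lambda^*,\infty)$, never equal to a pole $-1/(\gamma b_j)$ of $G$ and with $a_iG(e(\lambda))\ne\lambda$, satisfying $s(\lambda)=\sum_{i=1}^p\frac{\omega_i}{a_iG(e(\lambda))-\lambda}$ and $e(\lambda)=\sum_{i=1}^p\frac{a_i\omega_i}{a_iG(e(\lambda))-\lambda}$. *)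

theory Defs
  imports "HOL-Probability.Probability"
begin

definition msupport :: "real measure \<Rightarrow> real set" where
  "msupport \<mu> = {x. \<forall>r>0. 0 < emeasure \<mu> {x - r <..< x + r}}"

definition stieltjes :: "real measure \<Rightarrow> real \<Rightarrow> real" where
  "stieltjes \<mu> l = (\<integral>t. 1 / (t - l) \<partial>\<mu>)"

definition Gfun :: "real \<Rightarrow> nat \<Rightarrow> (nat \<Rightarrow> real) \<Rightarrow> (nat \<Rightarrow> real) \<Rightarrow> real \<Rightarrow> real" where
  "Gfun \<gamma> n b \<pi> x = (\<Sum>j=1..n. b j * \<pi> j / (1 + \<gamma> * b j * x))"

end

theory Submission imports Defs begin

text \<open>
  Write \<open>c = -1/(\<gamma> b\<^sup>*)\<close>, the largest pole of \<open>G\<close>. The two master equations combine to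
  \<open>G(e) e - \<lambda> s = 1\<close>; since \<open>s(\<lambda>) \<ge> -1/(\<lambda> - \<lambda>\<^sup>*)\<close>, any \<open>e(\<lambda>) \<le> c\<close> forces \<open>G(e(\<lambda>)) = O(1/\<lambda>)\<close>,
  and then the second master equation gives \<open>e(\<lambda>) = O(1/\<lambda>) > c\<close> for \<open>\<lambda>\<close> large, a contradiction.
  So \<open>e > c\<close> at some point, and as \<open>e\<close> is continuous on the connected set \<open>(\<lambda>\<^sup>*, \<infinity>)\<close> and never
  equals the pole \<open>c\<close>, it stays above \<open>c\<close> everywhere.
\<close>

lemma AE_mem_msupport:
  assumes "sets \<mu> = sets borel"
  shows "AE x in \<mu>. x \<in> msupport \<mu>"
proof -
  define S where "S = {q :: rat \<times> rat. emeasure \<mu> {real_of_rat (fst q) <..< real_of_rat (snd q)} = 0}"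
  define N where "N = (\<Union>q\<in>S. {real_of_rat (fst q) <..< real_of_rat (snd q)})"
  have "N \<in> null_sets \<mu>"
    unfolding N_def
  proof (rule null_sets_UN')
    show "countable S" by (rule countable_subset[of _ UNIV]) auto
    fix q assume "q \<in> S"
    then show "{real_of_rat (fst q)<..<real_of_rat (snd q)} \<in> null_sets \<mu>"
      using assms by (auto simp: S_def null_sets_def sets_eq_imp_space_eq)
  qed
  moreover have "{x \<in> space \<mu>. x \<notin> msupport \<mu>} \<subseteq> N"
  proof
    fix x assume "x \<in> {x \<in> space \<mu>. x \<notin> msupport \<mu>}"
    then obtain r where r: "r > 0" "emeasure \<mu> {x - r <..< x + r} = 0"
      by (auto simp: msupport_def zero_less_iff_neq_zero)
    obtain u1 where u1: "x - r < real_of_rat u1" "real_of_rat u1 < x"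
      using Rats_dense_in_real[of "x - r" x] r(1) by (auto elim: Rats_cases)
    obtain u2 where u2: "x < real_of_rat u2" "real_of_rat u2 < x + r"
      using Rats_dense_in_real[of x "x + r"] r(1) by (auto elim: Rats_cases)
    have "emeasure \<mu> {real_of_rat u1<..<real_of_rat u2} \<le> emeasure \<mu> {x - r <..< x + r}"
      by (rule emeasure_mono) (use u1 u2 assms in auto)
    then have "(u1, u2) \<in> S" using r(2) by (simp add: S_def)
    then show "x \<in> N" using u1 u2 unfolding N_def by force
  qed
  ultimately show ?thesis by (rule AE_I')
qed

lemma stieltjes_lower_bound:
  assumes "prob_space \<mu>" "sets \<mu> = sets borel" "msupport \<mu> \<subseteq> {..lstar}" "lstar < l"
  shows "- 1 / (l - lstar) \<le> stieltjes \<mu> l"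
proof -
  interpret prob_space \<mu> by fact
  have meas: "(\<lambda>t. 1 / (t - l)) \<in> borel_measurable \<mu>"
    using assms(2) by (subst measurable_cong_sets[of \<mu> borel "borel::real measure" borel]) auto
  have bound: "AE t in \<mu>. norm (1 / (t - l)) \<le> 1 / (l - lstar)"
    using AE_mem_msupport[OF assms(2)]
  proof eventually_elim
    case (elim t)
    then have "l - lstar \<le> l - t" using assms(3) by auto
    then show ?case using assms(4) by (simp add: frac_le abs_minus_commute)
  qed
  have "(\<integral>t. - 1 / (l - lstar) \<partial>\<mu>) \<le> (\<integral>t. 1 / (t - l) \<partial>\<mu>)"
  proof (rule integral_mono_AE)
    show "AE t in \<mu>. - 1 / (l - lstar) \<le> 1 / (t - l)"
      using bound by eventually_elim (unfold real_norm_def abs_le_iff, linarith)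
  qed (use integrable_const_bound[OF bound meas] in auto)
  then show ?thesis by (simp add: stieltjes_def prob_space)
qed

lemma resolvent_sum_identity:
  fixes a \<omega> :: "'i \<Rightarrow> real"
  assumes "\<forall>i\<in>I. a i * g \<noteq> l"
  shows "g * (\<Sum>i\<in>I. a i * \<omega> i / (a i * g - l)) - l * (\<Sum>i\<in>I. \<omega> i / (a i * g - l)) = sum \<omega> I"
proof -
  have "g * (\<Sum>i\<in>I. a i * \<omega> i / (a i * g - l)) - l * (\<Sum>i\<in>I. \<omega> i / (a i * g - l))
      = (\<Sum>i\<in>I. \<omega> i * (a i * g - l) / (a i * g - l))"
    by (simp add: sum_distrib_left sum_subtractf[symmetric] algebra_simps diff_divide_distrib)
  also have "\<dots> = sum \<omega> I"
    by (rule sum.cong) (use assms in auto)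
  finally show ?thesis .
qed

lemma upper_bound_from_resolvent_identity:
  fixes g e s l lstar c :: real
  assumes "g * e - l * s = 1" "- 1 / (l - lstar) \<le> s" "e \<le> c" "c < 0" "0 \<le> lstar" "lstar < l"
  shows "g * (l - lstar) * (- c) \<le> lstar"
proof (cases "g \<le> 0")
  case True
  have "g * ((l - lstar) * (- c)) \<le> 0"
    using True assms(4,6) by (intro mult_nonpos_nonneg mult_nonneg_nonneg) auto
  then show ?thesis using assms(5) by (simp add: mult.assoc)
next
  case False
  have "l * (- 1 / (l - lstar)) \<le> l * s"
    using assms(2,5,6) by (intro mult_left_mono) auto
  then have "- lstar / (l - lstar) \<le> g * e"
    using assms(1,6) by (simp add: field_simps)
  moreover have "g * (- c) \<le> g * (- e)"
    using False assms(3) by (intro mult_left_mono) auto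
  ultimately have "g * (- c) \<le> lstar / (l - lstar)" by simp
  then show ?thesis using assms(6) by (simp add: field_simps)
qed

lemma resolvent_term_lower_bound:
  fixes x a g l :: real
  assumes "0 < x" "0 < l" "a * g \<le> l / 2"
  shows "- 2 * x / l \<le> x / (a * g - l)"
proof -
  have "x / (l - a * g) \<le> x / (l / 2)"
    using assms by (intro divide_left_mono) auto
  moreover have "x / (a * g - l) = - (x / (l - a * g))"
    using divide_minus_right[of x "l - a * g"] by simp
  ultimately show ?thesis by (simp add: mult.commute)
qed

text \<open>Here \<open>g\<close> stands for \<open>G(e(l))\<close>, and the hypotheses \<open>large\<close> say how large \<open>l\<close> must be.\<close>

lemma master_solution_above_at_large_point:
  fixes a \<omega> :: "'i \<Rightarrow> real"
  assumes pos: "\<forall>i\<in>I. 0 < a i \<and> 0 < \<omega> i" and "sum \<omega> I = 1"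
    and "0 \<le> lstar" "lstar < l" "c < 0"
    and nonpole: "\<forall>i\<in>I. a i * g \<noteq> l"
    and s_bound: "- 1 / (l - lstar) \<le> (\<Sum>i\<in>I. \<omega> i / (a i * g - l))"
    and large: "2 * sum a I * lstar \<le> l * (l - lstar) * (- c)" "2 * (\<Sum>i\<in>I. a i * \<omega> i) < l * (- c)"
  shows "c < (\<Sum>i\<in>I. a i * \<omega> i / (a i * g - l))"
proof (rule ccontr)
  define e where "e = (\<Sum>i\<in>I. a i * \<omega> i / (a i * g - l))"
  assume "\<not> c < e"
  have "g * e - l * (\<Sum>i\<in>I. \<omega> i / (a i * g - l)) = 1"
    using resolvent_sum_identity[OF nonpole, of \<omega>] \<open>sum \<omega> I = 1\<close> by (simp add: e_def)
  then have "g * (l - lstar) * (- c) \<le> lstar"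
    using upper_bound_from_resolvent_identity[OF _ s_bound] \<open>\<not> c < e\<close> assms(3-5) by simp
  have "finite I" using \<open>sum \<omega> I = 1\<close> sum.infinite by fastforce
  have "0 < l" using assms(3,4) by linarith
  have half: "a i * g \<le> l / 2" if "i \<in> I" for i
  proof -
    have "a i * (g * (l - lstar) * (- c)) \<le> a i * lstar"
      using \<open>g * (l - lstar) * (- c) \<le> lstar\<close> pos that by (intro mult_left_mono) auto
    also have "\<dots> \<le> sum a I * lstar"
      using pos that \<open>finite I\<close> \<open>0 \<le> lstar\<close>
      by (intro mult_right_mono member_le_sum) (auto simp: less_imp_le)
    finally have "a i * (g * (l - lstar) * (- c)) \<le> sum a I * lstar" .
    then have "a i * g * ((l - lstar) * (- c)) \<le> l / 2 * ((l - lstar) * (- c))"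
      using large(1) by (simp add: algebra_simps)
    then show ?thesis using assms(4,5) by (simp add: mult_le_cancel_right)
  qed
  have "(\<Sum>i\<in>I. - 2 / l * (a i * \<omega> i)) \<le> e"
    unfolding e_def
  proof (rule sum_mono)
    fix i assume "i \<in> I"
    then show "- 2 / l * (a i * \<omega> i) \<le> a i * \<omega> i / (a i * g - l)"
      using resolvent_term_lower_bound[of "a i * \<omega> i" l "a i" g] pos half \<open>0 < l\<close> by simp
  qed
  moreover have "c < - 2 / l * (\<Sum>i\<in>I. a i * \<omega> i)"
    using large(2) \<open>0 < l\<close> by (simp add: field_simps)
  ultimately show False using \<open>\<not> c < e\<close> by (simp add: sum_distrib_left)
qed

lemma exists_large_point:
  fixes lstar A M d :: real
  assumes "0 \<le> lstar" "0 \<le> A" "0 \<le> M" "0 < d"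
  shows "\<exists>l>lstar. 2 * A * lstar \<le> l * (l - lstar) * d \<and> 2 * M < l * d"
proof (intro exI conjI)
  define l where "l = lstar + 1 + (2 * A * lstar + 2 * M) / d"
  have "0 \<le> (2 * A * lstar + 2 * M) / d" using assms by simp
  then show "lstar < l" by (simp add: l_def)
  have "2 * A * lstar \<le> (l - lstar) * d"
    using assms by (simp add: l_def field_simps)
  also have "\<dots> \<le> l * ((l - lstar) * d)"
  proof -
    have "1 \<le> l" using assms(1) \<open>0 \<le> (2 * A * lstar + 2 * M) / d\<close> by (simp add: l_def)
    then show ?thesis
      using mult_right_mono[of 1 l "(l - lstar) * d"] \<open>lstar < l\<close> assms(4) by simp
  qed
  finally show "2 * A * lstar \<le> l * (l - lstar) * d" by (simp add: mult.assoc)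
  have "l * d = (lstar + 1) * d + 2 * A * lstar + 2 * M"
    using assms(4) by (simp add: l_def field_simps)
  moreover have "0 < (lstar + 1) * d" "0 \<le> A * lstar"
    using assms by simp_all
  ultimately show "2 * M < l * d" by linarith
qed

lemma connected_continuous_avoiding_value_above:
  fixes f :: "'a::topological_space \<Rightarrow> real"
  assumes "connected S" "continuous_on S f" "\<forall>x\<in>S. f x \<noteq> c" "x0 \<in> S" "c < f x0" "x \<in> S"
  shows "c < f x"
proof (rule ccontr)
  assume "\<not> c < f x"
  have "connected (f ` S)" using assms(1,2) by (intro connected_continuous_image)
  then have "c \<in> f ` S"
    using connectedD_interval[of "f ` S" "f x" "f x0" c] \<open>\<not> c < f x\<close> assms(4-6) by force
  then show False using assms(3) by auto
qed

theorem corollary3p4: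
  fixes \<gamma> lstar :: real and p n :: nat and a \<omega> b \<pi> :: "nat \<Rightarrow> real"
    and \<mu> :: "real measure" and e :: "real \<Rightarrow> real"
  assumes "\<gamma> > 0"
    and "\<forall>i\<in>{1..p}. a i > 0 \<and> \<omega> i > 0" and "(\<Sum>i=1..p. \<omega> i) = 1"
    and "\<forall>j\<in>{1..n}. b j > 0 \<and> \<pi> j > 0" and "(\<Sum>j=1..n. \<pi> j) = 1"
    and "prob_space \<mu>" and "sets \<mu> = sets borel"
    and "compact (msupport \<mu>)" and "msupport \<mu> \<subseteq> {0..}"
    and "lstar = Sup (msupport \<mu>)" and "lstar > 0"
    and "continuous_on {lstar<..} e"
    and "\<forall>l>lstar. \<forall>j\<in>{1..n}. e l \<noteq> - 1 / (\<gamma> * b j)"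
    and "\<forall>l>lstar. \<forall>i\<in>{1..p}. a i * Gfun \<gamma> n b \<pi> (e l) \<noteq> l"
    and "\<forall>l>lstar. stieltjes \<mu> l = (\<Sum>i=1..p. \<omega> i / (a i * Gfun \<gamma> n b \<pi> (e l) - l))"
    and "\<forall>l>lstar. e l = (\<Sum>i=1..p. a i * \<omega> i / (a i * Gfun \<gamma> n b \<pi> (e l) - l))"
  shows "\<forall>l>lstar. e l > - 1 / (\<gamma> * Max (b ` {1..n}))"
proof -
  define c where "c = - 1 / (\<gamma> * Max (b ` {1..n}))"
  have "{1..n} \<noteq> {}" using assms(5) by (metis sum.empty zero_neq_one)
  then have "Max (b ` {1..n}) \<in> b ` {1..n}" by (intro Max_in) auto
  then obtain jmax where jmax: "jmax \<in> {1..n}" "b jmax = Max (b ` {1..n})" by auto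
  then have "0 < Max (b ` {1..n})" using assms(4) by force
  then have "c < 0" using assms(1,4) by (simp add: c_def)
  have "c = - 1 / (\<gamma> * b jmax)" using jmax(2) by (simp add: c_def)
  then have avoid: "\<forall>l\<in>{lstar<..}. e l \<noteq> c" using assms(13) jmax(1) by auto
  have "bdd_above (msupport \<mu>)" using assms(8) by (simp add: compact_imp_bounded bounded_imp_bdd_above)
  then have "msupport \<mu> \<subseteq> {..lstar}" using assms(10) by (auto intro: cSup_upper)
  have "0 \<le> sum a {1..p}" "0 \<le> (\<Sum>i=1..p. a i * \<omega> i)"
    using assms(2) by (auto intro: sum_nonneg simp: less_imp_le)
  then obtain L where L: "lstar < L" "2 * sum a {1..p} * lstar \<le> L * (L - lstar) * (- c)"
      "2 * (\<Sum>i=1..p. a i * \<omega> i) < L * (- c)"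
    using exists_large_point[of lstar _ _ "- c"] assms(11) \<open>c < 0\<close> by (meson less_imp_le neg_0_less_iff_less)
  define g where "g = Gfun \<gamma> n b \<pi> (e L)"
  have nonpole: "\<forall>i\<in>{1..p}. a i * g \<noteq> L" using assms(14) L(1) by (simp add: g_def)
  note s_eq = assms(15)[rule_format, OF L(1), folded g_def]
  note e_eq = assms(16)[rule_format, OF L(1), folded g_def]
  have "- 1 / (L - lstar) \<le> (\<Sum>i=1..p. \<omega> i / (a i * g - L))"
    using stieltjes_lower_bound[OF assms(6,7) \<open>msupport \<mu> \<subseteq> {..lstar}\<close> L(1)] s_eq by simp
  then have "c < e L"
    unfolding e_eq using assms(11) L(1)
    by (intro master_solution_above_at_large_point[OF assms(2,3) _ _ \<open>c < 0\<close> nonpole _ L(2,3)]) auto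
  have "c < e l" if "lstar < l" for l
    using connected_continuous_avoiding_value_above[OF connected_Ioi assms(12) avoid _ \<open>c < e L\<close>] L(1) that
    by simp
  then show ?thesis by (simp add: c_def)
qed

end
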